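(* Let $w:\mathbb{R}^d\to\mathbb{R}_+$ be continuous with $w(0)=0$. Let $Y$ be an $\mathbb{R}^d$-valued random variable with $0\in\mathcal{S}(Y)$ and such that $P(Y\in B(0,\epsilon))>0$ for all $\epsilon>0$. Then for each $\eta>0$ there exists $f\in C_+(\overline{\mathbb{R}^d})$ such that $E f(Y)=1$, $E f(Y)w(Y)<\eta$, $E f(Y)1_{\{|Y|\ge\eta\}}<\eta$, and $E f(Y)Y=0$.
   Context: $\mathcal{S}(Y)$ denotes the relative interior of the convex hull of the support of the law of $Y$. $B(x,r)$ is the closed Euclidean ball of radius $r$ around $x$. $\overline{\mathbb{R}^d}$ is the one-point compactification of $\mathbb{R}^d$, $C(\overline{\mathbb{R}^d})$ the real-valued continuous functions on it, and $C_+(\overline{\mathbb{R}^d})=\{g\in C(\overline{\mathbb{R}^d}):g(x)>0 \text{ for all } x\in\mathbb{R}^d\}$. *)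

theory Defs
  imports "HOL-Probability.Probability"
begin

definition measure_support :: "'a::euclidean_space measure \<Rightarrow> 'a set" where
  "measure_support N = {x. \<forall>e>0. emeasure N (ball x e) > 0}"

definition S_of :: "'w measure \<Rightarrow> ('w \<Rightarrow> 'a::euclidean_space) \<Rightarrow> 'a set" where
  "S_of M Y = rel_interior (convex hull (measure_support (distr M borel Y)))"

text \<open>C_+ of the one-point compactification: continuous functions on R^d that extend
continuously to the point at infinity (i.e. have a finite limit at infinity) and are
strictly positive on R^d.\<close>
definition C_plus :: "('a::euclidean_space \<Rightarrow> real) set" where
  "C_plus = {g. continuous_on UNIV g \<and> (\<exists>L. (g \<longlongrightarrow> L) at_infinity) \<and> (\<forall>x. g x > 0)}"

end

theory Submission
  imports Defs
begin

text \<open>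
  For continuous nonnegative weights g decaying fast enough at infinity, the first moments
  \<open>E g(Y) Y\<close> form a convex cone K. A vector a with \<open>a \<bullet> k \<ge> 0\<close> on K forces \<open>a \<bullet> Y \<ge> 0\<close>
  almost surely, and since 0 lies in the relative interior of the convex hull of the support
  of Y, even \<open>a \<bullet> Y = 0\<close>; so the dual cone of K is orthogonal to K and K is a subspace.
  Writing every element of K as a nonnegative combination of finitely many unit vectors of K
  shows that each \<open>v \<in> K\<close> is the first moment of a weight whose mass and w-moment are
  \<open>O(|v|)\<close>. The density is then a tent function supported in a small ball around 0
  (positive mass, small w-moment, first moment of size \<open>\<epsilon>\<close> relative to its mass), plus such
  a cheap weight cancelling its first moment, plus a tiny multiple of a strictly positive
  weight with vanishing first moment, normalised to total mass 1.
\<close>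

section \<open>Supports of measures and convex cones\<close>

lemma AE_in_measure_support:
  fixes N :: "'a::euclidean_space measure"
  assumes "sets N = sets borel"
  shows "AE x in N. x \<in> measure_support N"
proof -
  define F where "F = {ball x e | x e. e > 0 \<and> emeasure N (ball x e) = 0}"
  have compl: "- measure_support N = \<Union>F"
  proof (intro equalityI subsetI)
    fix y assume "y \<in> - measure_support N"
    then obtain e where "e > 0" "emeasure N (ball y e) = 0"
      unfolding measure_support_def by (auto simp: not_less)
    then show "y \<in> \<Union>F"
      unfolding F_def by (intro UnionI[of "ball y e"]) auto
  next
    fix y assume "y \<in> \<Union>F"
    then obtain x e where y: "y \<in> ball x e" and null: "emeasure N (ball x e) = 0"
      unfolding F_def by blast
    have "ball y (e - dist x y) \<subseteq> ball x e"
      by (simp add: ball_subset_ball_iff dist_commute)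
    then have "emeasure N (ball y (e - dist x y)) \<le> emeasure N (ball x e)"
      by (intro emeasure_mono) (auto simp: assms)
    with null have "emeasure N (ball y (e - dist x y)) = 0"
      by simp
    moreover have "e - dist x y > 0"
      using y by simp
    ultimately show "y \<in> - measure_support N"
      unfolding measure_support_def by (auto simp: not_less intro!: exI[of _ "e - dist x y"])
  qed
  obtain F' where F': "F' \<subseteq> F" "countable F'" "\<Union>F' = \<Union>F"
    using Lindelof[of F] unfolding F_def by blast
  have "(\<Union>B\<in>F'. B) \<in> null_sets N"
  proof (rule null_sets_UN')
    fix B assume "B \<in> F'"
    then show "B \<in> null_sets N"
      using F'(1) by (auto simp: F_def null_sets_def assms)
  qed (use F' in simp)
  with compl F'(3) show ?thesis
    by (intro AE_I'[of "\<Union>F'"]) auto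
qed

lemma measure_support_subset_closed:
  fixes N :: "'a::euclidean_space measure"
  assumes "sets N = sets borel" "closed C" "AE x in N. x \<in> C"
  shows "measure_support N \<subseteq> C"
proof
  fix x assume x: "x \<in> measure_support N"
  show "x \<in> C"
  proof (rule ccontr)
    assume "x \<notin> C"
    then obtain e where "e > 0" "ball x e \<subseteq> - C"
      using assms(2) open_contains_ball[of "- C"] by (auto simp: open_Compl)
    then have "AE z in N. z \<notin> ball x e"
      using assms(3) by (auto elim!: eventually_mono)
    moreover have "ball x e \<in> sets N"
      by (simp add: assms(1))
    ultimately have "ball x e \<in> null_sets N"
      using AE_iff_null_sets by blast
    then have "emeasure N (ball x e) = 0"
      by auto
    moreover have "emeasure N (ball x e) > 0"
      using x \<open>e > 0\<close> unfolding measure_support_def by blast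
    ultimately show False
      by simp
  qed
qed

lemma halfspace_imp_hyperplane_if_0_in_rel_interior:
  fixes S :: "'a::euclidean_space set"
  assumes "0 \<in> rel_interior S" "S \<subseteq> {x. 0 \<le> a \<bullet> x}"
  shows "S \<subseteq> {x. a \<bullet> x = 0}"
proof
  fix y assume y: "y \<in> S"
  show "y \<in> {x. a \<bullet> x = 0}"
  proof (rule ccontr)
    assume "y \<notin> {x. a \<bullet> x = 0}"
    with assms(2) y have ay: "a \<bullet> y > 0"
      by force
    obtain e where e: "e > 0" "cball 0 e \<inter> affine hull S \<subseteq> S"
      using assms(1) by (auto simp: mem_rel_interior_cball)
    define z where "z = - (e / norm y) *\<^sub>R y"
    have "y \<noteq> 0"
      using ay by auto
    then have "z \<in> cball 0 e"
      using e by (simp add: z_def)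
    moreover have "z \<in> affine hull S"
    proof -
      have "y \<in> affine hull S" "0 \<in> affine hull S"
        using y assms(1) rel_interior_subset hull_subset[of S affine] by auto
      then have "(1 - (- (e / norm y))) *\<^sub>R 0 + (- (e / norm y)) *\<^sub>R y \<in> affine hull S"
        using affine_affine_hull[of S] unfolding affine_alt by blast
      then show ?thesis
        by (simp add: z_def)
    qed
    ultimately have "z \<in> S"
      using e(2) by blast
    then have "0 \<le> a \<bullet> z"
      using assms(2) by blast
    moreover have "a \<bullet> z < 0"
      using ay e \<open>y \<noteq> 0\<close> by (simp add: z_def mult_pos_pos)
    ultimately show False
      by simp
  qed
qed

lemma AE_inner_eq_0_if_nonneg:
  fixes N :: "'a::euclidean_space measure"
  assumes "sets N = sets borel" "0 \<in> rel_interior (convex hull (measure_support N))"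
    and "AE z in N. 0 \<le> a \<bullet> z"
  shows "AE z in N. a \<bullet> z = 0"
proof -
  have "measure_support N \<subseteq> {x. 0 \<le> a \<bullet> x}"
    using assms(3) by (intro measure_support_subset_closed[OF assms(1) closed_halfspace_ge]) simp
  then have "convex hull (measure_support N) \<subseteq> {x. 0 \<le> a \<bullet> x}"
    by (rule hull_minimal) (simp add: convex_halfspace_ge)
  then have "convex hull (measure_support N) \<subseteq> {x. a \<bullet> x = 0}"
    using assms(2) by (rule halfspace_imp_hyperplane_if_0_in_rel_interior[rotated])
  then have "measure_support N \<subseteq> {x. a \<bullet> x = 0}"
    using hull_subset[of "measure_support N" convex] by blast
  then show ?thesis
    using AE_in_measure_support[OF assms(1)] by (auto elim!: eventually_mono)
qed

lemma convex_cone_uminus_if_dual_cone_orthogonal: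
  fixes K :: "'a::euclidean_space set"
  assumes K: "convex_cone K"
    and dual: "\<And>a. \<forall>k\<in>K. 0 \<le> a \<bullet> k \<Longrightarrow> \<forall>k\<in>K. a \<bullet> k = 0"
    and k: "k \<in> K"
  shows "- k \<in> K"
proof (rule ccontr)
  assume "- k \<notin> K"
  define S where "S = (+) k ` K"
  have "convex S"
    using K unfolding S_def convex_cone_def by (blast intro: convex_translation)
  moreover have "S \<noteq> {}" "0 \<notin> S"
    using K \<open>- k \<notin> K\<close> by (auto simp: S_def convex_cone_def add_eq_0_iff)
  ultimately obtain a where a: "a \<in> span S" "a \<noteq> 0" "\<And>x. x \<in> S \<Longrightarrow> 0 \<le> a \<bullet> x"
    using separating_hyperplane_set_0_inspan by blast
  have "0 \<le> a \<bullet> x" if x: "x \<in> K" for x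
  proof (rule ccontr)
    assume "\<not> 0 \<le> a \<bullet> x"
    then have ax: "a \<bullet> x < 0"
      by simp
    \<comment> \<open>a large multiple of x moves k + x into the open halfspace a < 0\<close>
    define t where "t = (\<bar>a \<bullet> k\<bar> + 1) / - (a \<bullet> x)"
    have "t \<ge> 0"
      unfolding t_def using ax by (intro divide_nonneg_pos) auto
    moreover have "t * (a \<bullet> x) = - (\<bar>a \<bullet> k\<bar> + 1)"
      using ax by (simp add: t_def)
    moreover have "k + t *\<^sub>R x \<in> S"
      using K x \<open>t \<ge> 0\<close> by (auto simp: S_def convex_cone_scaleR)
    ultimately show False
      using a(3)[of "k + t *\<^sub>R x"] by (simp add: inner_add_right)
  qed
  then have "\<forall>x\<in>K. a \<bullet> x = 0"
    using dual by blast
  moreover have "S \<subseteq> span K"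
    using k by (auto simp: S_def intro: span_add span_base)
  then have "a \<in> span K"
    using a(1) span_minimal[OF _ subspace_span] by blast
  ultimately have "a \<bullet> a = 0"
    using orthogonal_to_span[of a K a] by (auto simp: orthogonal_def)
  with \<open>a \<noteq> 0\<close> show False
    by simp
qed

lemma subspace_if_dual_cone_orthogonal:
  fixes K :: "'a::euclidean_space set"
  assumes K: "convex_cone K"
    and dual: "\<And>a. \<forall>k\<in>K. 0 \<le> a \<bullet> k \<Longrightarrow> \<forall>k\<in>K. a \<bullet> k = 0"
  shows "subspace K"
proof -
  have neg: "- k \<in> K" if "k \<in> K" for k
    using convex_cone_uminus_if_dual_cone_orthogonal[of K k] K dual that by blast
  show ?thesis
    unfolding subspace_def
  proof (intro conjI ballI allI)
    show "0 \<in> K"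
      using K by (rule convex_cone_contains_0)
    show "x + y \<in> K" if "x \<in> K" "y \<in> K" for x y
      using K that by (rule convex_cone_add)
    show "c *\<^sub>R x \<in> K" if "x \<in> K" for c x
    proof (cases "c \<ge> 0")
      case False
      then have "(- c) *\<^sub>R (- x) \<in> K"
        using K neg[OF that] by (intro convex_cone_scaleR) auto
      then show ?thesis
        by simp
    qed (simp add: K that convex_cone_scaleR)
  qed
qed

lemma orthonormal_disjoint_uminus:
  fixes B :: "'a::real_inner set"
  assumes "pairwise orthogonal B" "\<And>x. x \<in> B \<Longrightarrow> norm x = 1"
  shows "B \<inter> uminus ` B = {}"
proof safe
  fix b c assume "b \<in> B" "c \<in> B" "- c \<in> B"
  then have "c \<bullet> c = 1"
    using assms(2) by (simp add: dot_square_norm)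
  then have "\<not> orthogonal c (- c)"
    by (simp add: orthogonal_def)
  then have "c = - c"
    using assms(1) \<open>c \<in> B\<close> \<open>- c \<in> B\<close> by (auto simp: pairwise_def)
  then have "c \<bullet> c = - (c \<bullet> c)"
    by (metis inner_minus_right)
  with \<open>c \<bullet> c = 1\<close> show "- c \<in> {}"
    by simp
qed

lemma subspace_sum_positive_parts:
  fixes K :: "'a::euclidean_space set"
  assumes "subspace K"
  obtains V where "finite V" "V \<subseteq> K" "\<And>u. u \<in> V \<Longrightarrow> norm u = 1"
    "\<And>v. v \<in> K \<Longrightarrow> (\<Sum>u\<in>V. max 0 (v \<bullet> u) *\<^sub>R u) = v"
proof -
  obtain B where B: "B \<subseteq> K" "pairwise orthogonal B" "\<And>x. x \<in> B \<Longrightarrow> norm x = 1"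
    "independent B" "span B = K"
    using orthonormal_basis_subspace[OF assms] by metis
  have "finite B"
    using B(4) independent_imp_finite by blast
  have disjoint: "B \<inter> uminus ` B = {}"
    using B(2,3) by (rule orthonormal_disjoint_uminus)
  show ?thesis
  proof
    show "finite (B \<union> uminus ` B)"
      using \<open>finite B\<close> by simp
    show "B \<union> uminus ` B \<subseteq> K"
      using B(1) assms by (auto intro: subspace_neg)
    show "norm u = 1" if "u \<in> B \<union> uminus ` B" for u
      using that B(3) by auto
    show "(\<Sum>u\<in>B \<union> uminus ` B. max 0 (v \<bullet> u) *\<^sub>R u) = v" if "v \<in> K" for v
    proof -
      have "(\<Sum>u\<in>B \<union> uminus ` B. max 0 (v \<bullet> u) *\<^sub>R u)
          = (\<Sum>b\<in>B. max 0 (v \<bullet> b) *\<^sub>R b + max 0 (- (v \<bullet> b)) *\<^sub>R (- b))"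
        using \<open>finite B\<close> disjoint
        by (simp add: sum.union_disjoint sum.reindex inj_on_def sum.distrib sum_subtractf sum_negf)
      also have "\<dots> = (\<Sum>b\<in>B. (v \<bullet> b) *\<^sub>R b)"
        by (intro sum.cong refl) (simp add: max_def algebra_simps)
      also have "\<dots> = v"
        using orthonormal_basis_expand[OF B(2,3)] that B(5) \<open>finite B\<close> by auto
      finally show ?thesis .
    qed
  qed
qed

section \<open>Admissible weights and their moments\<close>

locale moment_problem = prob_space M for M :: "'w measure" +
  fixes Y :: "'w \<Rightarrow> 'a::euclidean_space" and w :: "'a \<Rightarrow> real"
  assumes measurable_Y [measurable]: "Y \<in> borel_measurable M"
    and continuous_w: "continuous_on UNIV w"
    and w_nonneg: "\<And>x. 0 \<le> w x"
    and zero_in_S: "0 \<in> S_of M Y"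
begin

lemma borel_measurable_w [measurable]: "w \<in> borel_measurable borel"
  using continuous_w by (intro borel_measurable_continuous_onI) auto

text \<open>The growth condition makes every moment below integrable and forces decay at infinity.\<close>
definition admissible :: "('a \<Rightarrow> real) set" where
  "admissible = {g. continuous_on UNIV g \<and> (\<forall>x. 0 \<le> g x) \<and>
                    (\<exists>B. \<forall>x. g x * ((1 + norm x) * (1 + w x)) \<le> B)}"

definition moment_weight :: "('a \<Rightarrow> 'b::real_normed_vector) \<Rightarrow> bool" where
  "moment_weight \<phi> \<longleftrightarrow> \<phi> \<in> borel_measurable borel \<and> (\<forall>x. norm (\<phi> x) \<le> (1 + norm x) * (1 + w x))"

definition moment :: "('a \<Rightarrow> 'b::{banach,second_countable_topology}) \<Rightarrow> ('a \<Rightarrow> real) \<Rightarrow> 'b" where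
  "moment \<phi> g = (\<integral>\<omega>. g (Y \<omega>) *\<^sub>R \<phi> (Y \<omega>) \<partial>M)"

abbreviation mass :: "('a \<Rightarrow> real) \<Rightarrow> real" where
  "mass \<equiv> moment (\<lambda>_. 1)"

abbreviation cost :: "('a \<Rightarrow> real) \<Rightarrow> real" where
  "cost \<equiv> moment (\<lambda>x. 1 + w x)"

lemma weight_factors_pos: "0 < 1 + norm x" "0 < 1 + w x"
  by (simp_all add: add_pos_nonneg w_nonneg)

lemma admissibleI:
  assumes "continuous_on UNIV g" "\<And>x. 0 \<le> g x" "\<And>x. g x * ((1 + norm x) * (1 + w x)) \<le> B"
  shows "g \<in> admissible"
  using assms unfolding admissible_def by blast

lemma admissible_nonneg: "g \<in> admissible \<Longrightarrow> 0 \<le> g x"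
  unfolding admissible_def by blast

lemma borel_measurable_admissible [measurable]: "g \<in> admissible \<Longrightarrow> g \<in> borel_measurable borel"
  unfolding admissible_def by (intro borel_measurable_continuous_onI) auto

lemma admissible_add: "g \<in> admissible \<Longrightarrow> h \<in> admissible \<Longrightarrow> (\<lambda>x. g x + h x) \<in> admissible"
  unfolding admissible_def
proof safe
  fix B1 B2 assume "\<forall>x. g x * ((1 + norm x) * (1 + w x)) \<le> B1"
    "\<forall>x. h x * ((1 + norm x) * (1 + w x)) \<le> B2"
  then show "\<exists>B. \<forall>x. (g x + h x) * ((1 + norm x) * (1 + w x)) \<le> B"
    by (intro exI[of _ "B1 + B2"]) (simp add: distrib_right add_mono)
qed (auto intro: continuous_intros add_nonneg_nonneg)

lemma admissible_scale: "g \<in> admissible \<Longrightarrow> 0 \<le> c \<Longrightarrow> (\<lambda>x. c * g x) \<in> admissible"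
  unfolding admissible_def
proof safe
  fix B assume "0 \<le> c" "\<forall>x. g x * ((1 + norm x) * (1 + w x)) \<le> B"
  then show "\<exists>B. \<forall>x. c * g x * ((1 + norm x) * (1 + w x)) \<le> B"
    by (intro exI[of _ "c * B"]) (simp add: mult.assoc mult_left_mono)
qed (auto intro: continuous_intros)

lemma admissible_zero: "(\<lambda>_. 0) \<in> admissible"
  by (rule admissibleI[where B=0]) auto

lemma admissible_sum:
  "finite I \<Longrightarrow> (\<And>i. i \<in> I \<Longrightarrow> f i \<in> admissible) \<Longrightarrow> (\<lambda>x. \<Sum>i\<in>I. f i x) \<in> admissible"
proof (induction I rule: finite_induct)
  case empty
  show ?case
    using admissible_zero by simp
next
  case (insert i I)
  then show ?case
    using admissible_add[of "f i" "\<lambda>x. \<Sum>i\<in>I. f i x"] by simp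
qed

lemma admissible_tendsto_0:
  assumes "g \<in> admissible"
  shows "(g \<longlongrightarrow> 0) at_infinity"
proof (rule tendstoI)
  fix e :: real assume "e > 0"
  obtain B where B: "\<And>x. g x * ((1 + norm x) * (1 + w x)) \<le> B"
    using assms unfolding admissible_def by blast
  have "g x < e" if "B / e \<le> norm x" for x
  proof -
    have "g x * (1 + norm x) \<le> g x * ((1 + norm x) * (1 + w x))"
      using admissible_nonneg[OF assms, of x] w_nonneg[of x]
      by (intro mult_left_mono) (auto simp: algebra_simps)
    also have "\<dots> \<le> B"
      by (rule B)
    also have "\<dots> < e * (1 + norm x)"
      using that \<open>e > 0\<close> by (simp add: field_simps)
    finally show ?thesis
      by (simp add: add_pos_nonneg)
  qed
  then show "\<forall>\<^sub>F x in at_infinity. dist (g x) 0 < e"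
    unfolding eventually_at_infinity using admissible_nonneg[OF assms] by force
qed

lemma moment_weights:
  "moment_weight id" "moment_weight (\<lambda>_. 1 :: real)" "moment_weight w" "moment_weight (\<lambda>x. 1 + w x)"
  using w_nonneg norm_ge_zero
  by (auto simp: moment_weight_def algebra_simps add_increasing2 mult_nonneg_nonneg)

lemma integrable_moment:
  fixes \<phi> :: "'a \<Rightarrow> 'b::{banach,second_countable_topology}"
  assumes g: "g \<in> admissible" and \<phi>: "moment_weight \<phi>"
  shows "integrable M (\<lambda>\<omega>. g (Y \<omega>) *\<^sub>R \<phi> (Y \<omega>))"
proof -
  obtain B where B: "\<And>x. g x * ((1 + norm x) * (1 + w x)) \<le> B"
    using g unfolding admissible_def by blast
  have "norm (g x *\<^sub>R \<phi> x) \<le> B" for x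
  proof -
    have "norm (g x *\<^sub>R \<phi> x) = g x * norm (\<phi> x)"
      using admissible_nonneg[OF g] by simp
    also have "\<dots> \<le> g x * ((1 + norm x) * (1 + w x))"
      using \<phi> admissible_nonneg[OF g] by (intro mult_left_mono) (auto simp: moment_weight_def)
    finally show ?thesis
      using B[of x] by linarith
  qed
  moreover have "\<phi> \<in> borel_measurable borel"
    using \<phi> by (simp add: moment_weight_def)
  then have "(\<lambda>\<omega>. g (Y \<omega>) *\<^sub>R \<phi> (Y \<omega>)) \<in> borel_measurable M"
    using g by measurable
  ultimately show ?thesis
    by (intro integrable_const_bound[where B=B] AE_I2) auto
qed

lemma moment_add:
  assumes "g \<in> admissible" "h \<in> admissible" "moment_weight \<phi>"
  shows "moment \<phi> (\<lambda>x. g x + h x) = moment \<phi> g + moment \<phi> h"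
  using integrable_moment[OF assms(1,3)] integrable_moment[OF assms(2,3)]
  by (simp add: moment_def scaleR_add_left)

lemma moment_scale: "moment \<phi> (\<lambda>x. c * g x) = c *\<^sub>R moment \<phi> g"
  unfolding moment_def by (simp flip: scaleR_scaleR)

lemma moment_sum:
  assumes "\<And>i. i \<in> I \<Longrightarrow> f i \<in> admissible" "moment_weight \<phi>"
  shows "moment \<phi> (\<lambda>x. \<Sum>i\<in>I. f i x) = (\<Sum>i\<in>I. moment \<phi> (f i))"
  using integrable_moment[OF assms(1) assms(2)]
  by (simp add: moment_def scaleR_sum_left)

lemma moment_nonneg:
  fixes \<phi> :: "'a \<Rightarrow> real"
  shows "g \<in> admissible \<Longrightarrow> (\<And>x. 0 \<le> \<phi> x) \<Longrightarrow> 0 \<le> moment \<phi> g"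
  unfolding moment_def by (intro integral_nonneg_AE) (simp add: admissible_nonneg)

lemma moment_mono:
  fixes \<phi> \<psi> :: "'a \<Rightarrow> real"
  assumes "g \<in> admissible" "moment_weight \<phi>" "moment_weight \<psi>" "\<And>x. \<phi> x \<le> \<psi> x"
  shows "moment \<phi> g \<le> moment \<psi> g"
  unfolding moment_def
  using integrable_moment[OF assms(1,2)] integrable_moment[OF assms(1,3)] assms(4)
  by (intro integral_mono) (auto intro: mult_left_mono admissible_nonneg[OF assms(1)])

lemma norm_moment_le:
  assumes "g \<in> admissible" "moment_weight \<phi>" "\<And>x. g x * norm (\<phi> x) \<le> c * g x"
  shows "norm (moment \<phi> g) \<le> c * mass g"
proof -
  have "norm (moment \<phi> g) \<le> (\<integral>\<omega>. norm (g (Y \<omega>) *\<^sub>R \<phi> (Y \<omega>)) \<partial>M)"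
    unfolding moment_def by (rule integral_norm_bound)
  also have "\<dots> \<le> (\<integral>\<omega>. c * g (Y \<omega>) \<partial>M)"
  proof (rule integral_mono)
    show "integrable M (\<lambda>\<omega>. norm (g (Y \<omega>) *\<^sub>R \<phi> (Y \<omega>)))"
      using integrable_moment[OF assms(1,2)] by (rule integrable_norm)
    show "integrable M (\<lambda>\<omega>. c * g (Y \<omega>))"
      using integrable_moment[OF assms(1) moment_weights(2)] by simp
    show "norm (g (Y \<omega>) *\<^sub>R \<phi> (Y \<omega>)) \<le> c * g (Y \<omega>)" for \<omega>
      using assms(3) admissible_nonneg[OF assms(1)] by simp
  qed
  also have "\<dots> = c * mass g"
    by (simp add: moment_def)
  finally show ?thesis .
qed

lemma inner_first_moment:
  assumes "g \<in> admissible"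
  shows "a \<bullet> moment id g = (\<integral>\<omega>. g (Y \<omega>) * (a \<bullet> Y \<omega>) \<partial>M)"
  using integral_inner_right[OF integrable_moment[OF assms moment_weights(1)], of a]
  by (simp add: moment_def)

lemma admissible_divide_weight:
  assumes "continuous_on UNIV u" "\<And>x. 0 \<le> u x" "\<And>x. u x \<le> c * (1 + norm x)"
  shows "(\<lambda>x. u x / ((1 + norm x) * ((1 + norm x) * (1 + w x)))) \<in> admissible"
proof (rule admissibleI)
  define P where "P x = (1 + norm x) * (1 + w x)" for x
  have P_pos: "0 < P x" for x
    using weight_factors_pos by (simp add: P_def)
  show "continuous_on UNIV (\<lambda>x. u x / ((1 + norm x) * ((1 + norm x) * (1 + w x))))"
    using assms(1) continuous_w P_pos[unfolded P_def, THEN less_imp_neq, symmetric]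
      weight_factors_pos(1)[THEN less_imp_neq, symmetric]
    by (intro continuous_intros) auto
  show "0 \<le> u x / ((1 + norm x) * ((1 + norm x) * (1 + w x)))" for x
    using assms(2)[of x] P_pos[of x] weight_factors_pos(1)[of x] by (simp add: P_def)
  show "u x / ((1 + norm x) * ((1 + norm x) * (1 + w x))) * ((1 + norm x) * (1 + w x)) \<le> c" for x
  proof -
    have "u x / ((1 + norm x) * P x) * P x = u x / (1 + norm x)"
      using P_pos[of x] unfolding times_divide_eq_left
      by (intro nonzero_mult_divide_mult_cancel_right) simp
    also have "\<dots> \<le> c"
      using assms(3)[of x] weight_factors_pos(1)[of x] by (simp add: divide_le_eq)
    finally show ?thesis
      by (simp add: P_def)
  qed
qed

lemma AE_nonneg_if_first_moments_nonneg:
  assumes "\<And>g. g \<in> admissible \<Longrightarrow> 0 \<le> a \<bullet> moment id g"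
  shows "AE \<omega> in M. 0 \<le> a \<bullet> Y \<omega>"
proof -
  define D where "D x = (1 + norm x) * ((1 + norm x) * (1 + w x))" for x
  have D_pos: "0 < D x" for x
    using weight_factors_pos[of x] by (simp add: D_def)
  define q where "q x = max 0 (- (a \<bullet> x)) / D x" for x
  define r where "r x = (max 0 (- (a \<bullet> x)))\<^sup>2 / D x" for x
  have r_nonneg: "0 \<le> r x" for x
    unfolding r_def using D_pos[of x] by simp
  have q_inner: "q x * (a \<bullet> x) = - r x" for x
    unfolding q_def r_def by (auto simp: max_def power2_eq_square field_simps)
  have "q \<in> admissible"
    unfolding q_def D_def
  proof (rule admissible_divide_weight)
    show "continuous_on UNIV (\<lambda>x. max 0 (- (a \<bullet> x)))"
      by (intro continuous_intros)
    show "max 0 (- (a \<bullet> x)) \<le> norm a * (1 + norm x)" for x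
      using Cauchy_Schwarz_ineq2[of a x] abs_ge_minus_self[of "a \<bullet> x"] norm_ge_zero[of a]
      unfolding distrib_left by linarith
  qed simp
  have "integrable M (\<lambda>\<omega>. q (Y \<omega>) * (a \<bullet> Y \<omega>))"
    using integrable_inner_right[OF integrable_moment[OF \<open>q \<in> admissible\<close> moment_weights(1)], of a]
    by simp
  from integrable_minus[OF this] have integrable_r: "integrable M (\<lambda>\<omega>. r (Y \<omega>))"
    using q_inner by simp
  have "0 \<le> a \<bullet> moment id q"
    using assms \<open>q \<in> admissible\<close> .
  also have "a \<bullet> moment id q = - (\<integral>\<omega>. r (Y \<omega>) \<partial>M)"
    using inner_first_moment[OF \<open>q \<in> admissible\<close>] q_inner by simp
  finally have "(\<integral>\<omega>. r (Y \<omega>) \<partial>M) = 0"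
    using r_nonneg by (intro antisym integral_nonneg_AE) auto
  then have "AE \<omega> in M. r (Y \<omega>) = 0"
    using integral_nonneg_eq_0_iff_AE[OF integrable_r] r_nonneg by simp
  then show ?thesis
    using D_pos[THEN less_imp_neq, symmetric] by (auto simp: r_def elim!: eventually_mono)
qed

lemma subspace_first_moments: "subspace (moment id ` admissible)"
proof (rule subspace_if_dual_cone_orthogonal)
  show "convex_cone (moment id ` admissible)"
    unfolding convex_cone_iff
  proof (intro conjI ballI allI impI)
    show "0 \<in> moment id ` admissible"
      using admissible_zero by (force simp: moment_def)
    show "x + y \<in> moment id ` admissible" if xy: "x \<in> moment id ` admissible" "y \<in> moment id ` admissible" for x y
    proof -
      obtain g h where "g \<in> admissible" "h \<in> admissible" "x = moment id g" "y = moment id h"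
        using xy by auto
      then show ?thesis
        using moment_add[OF _ _ moment_weights(1)]
        by (intro image_eqI[of _ _ "\<lambda>z. g z + h z"] admissible_add) auto
    qed
    show "c *\<^sub>R x \<in> moment id ` admissible" if x: "x \<in> moment id ` admissible" and "0 \<le> c" for x c
    proof -
      obtain g where "g \<in> admissible" "x = moment id g"
        using x by auto
      then show ?thesis
        using \<open>0 \<le> c\<close> by (intro image_eqI[of _ _ "\<lambda>z. c * g z"] admissible_scale) (auto simp: moment_scale)
    qed
  qed
  fix a assume "\<forall>k\<in>moment id ` admissible. 0 \<le> a \<bullet> k"
  then have "AE \<omega> in M. 0 \<le> a \<bullet> Y \<omega>"
    by (intro AE_nonneg_if_first_moments_nonneg) auto
  then have "AE z in distr M borel Y. a \<bullet> z = 0"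
    using zero_in_S by (intro AE_inner_eq_0_if_nonneg) (auto simp: S_of_def AE_distr_iff)
  then have "AE \<omega> in M. a \<bullet> Y \<omega> = 0"
    by (simp add: AE_distr_iff)
  then show "\<forall>k\<in>moment id ` admissible. a \<bullet> k = 0"
    using inner_first_moment by (auto intro!: integral_eq_zero_AE elim!: eventually_mono)
qed

lemma first_moment_cost_bound:
  obtains C where "0 \<le> C"
    "\<And>v. v \<in> moment id ` admissible \<Longrightarrow> \<exists>g\<in>admissible. moment id g = v \<and> cost g \<le> C * norm v"
proof -
  obtain V where V: "finite V" "V \<subseteq> moment id ` admissible" "\<And>u. u \<in> V \<Longrightarrow> norm u = 1"
    "\<And>v. v \<in> moment id ` admissible \<Longrightarrow> (\<Sum>u\<in>V. max 0 (v \<bullet> u) *\<^sub>R u) = v"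
    using subspace_sum_positive_parts[OF subspace_first_moments] by blast
  obtain h where h: "\<And>u. u \<in> V \<Longrightarrow> h u \<in> admissible \<and> moment id (h u) = u"
    using V(2) by (metis f_inv_into_f inv_into_into subsetD)
  show ?thesis
  proof (rule that)
    show "0 \<le> (\<Sum>u\<in>V. cost (h u))"
      using h w_nonneg by (intro sum_nonneg moment_nonneg) (auto simp: add_nonneg_nonneg)
    fix v assume v: "v \<in> moment id ` admissible"
    have coeff: "0 \<le> max 0 (v \<bullet> u)" "max 0 (v \<bullet> u) \<le> norm v" if "u \<in> V" for u
      using Cauchy_Schwarz_ineq2[of v u] V(3)[OF that] norm_ge_zero[of v] by auto
    define f where "f u = (\<lambda>x. max 0 (v \<bullet> u) * h u x)" for u
    have f_admissible: "f u \<in> admissible" if "u \<in> V" for u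
      unfolding f_def using h[OF that] coeff(1)[OF that] by (intro admissible_scale) auto
    have "moment id (\<lambda>x. \<Sum>u\<in>V. f u x) = (\<Sum>u\<in>V. moment id (f u))"
      by (rule moment_sum[OF f_admissible moment_weights(1)])
    also have "\<dots> = (\<Sum>u\<in>V. max 0 (v \<bullet> u) *\<^sub>R u)"
      using h by (intro sum.cong refl) (simp add: f_def moment_scale)
    finally have "moment id (\<lambda>x. \<Sum>u\<in>V. f u x) = (\<Sum>u\<in>V. max 0 (v \<bullet> u) *\<^sub>R u)" .
    then have "moment id (\<lambda>x. \<Sum>u\<in>V. f u x) = v"
      using V(4)[OF v] by simp
    moreover have "(\<lambda>x. \<Sum>u\<in>V. f u x) \<in> admissible"
      using V(1) f_admissible by (rule admissible_sum)
    moreover have "cost (\<lambda>x. \<Sum>u\<in>V. f u x) \<le> (\<Sum>u\<in>V. cost (h u)) * norm v"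
    proof -
      have "cost (\<lambda>x. \<Sum>u\<in>V. f u x) = (\<Sum>u\<in>V. max 0 (v \<bullet> u) * cost (h u))"
          using moment_sum[OF f_admissible moment_weights(4)] by (simp add: f_def moment_scale)
      also have "\<dots> \<le> (\<Sum>u\<in>V. norm v * cost (h u))"
        using coeff h w_nonneg
        by (intro sum_mono mult_right_mono moment_nonneg) (auto simp: add_nonneg_nonneg)
      finally show ?thesis
        by (simp add: sum_distrib_left mult.commute)
    qed
    ultimately show "\<exists>g\<in>admissible. moment id g = v \<and> cost g \<le> (\<Sum>u\<in>V. cost (h u)) * norm v"
      by blast
  qed
qed

lemma exists_positive_zero_first_moment:
  obtains h where "h \<in> admissible" "\<And>x. 0 < h x" "moment id h = 0"
proof -
  define h1 where "h1 x = 1 / ((1 + norm x) * ((1 + norm x) * (1 + w x)))" for x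
  have h1_pos: "0 < h1 x" for x
    using weight_factors_pos[of x] by (simp add: h1_def)
  have "h1 \<in> admissible"
    unfolding h1_def by (rule admissible_divide_weight[where c=1]) auto
  moreover have "- moment id h1 \<in> moment id ` admissible"
    using subspace_first_moments \<open>h1 \<in> admissible\<close> by (intro subspace_neg) auto
  then obtain h2 where "h2 \<in> admissible" "moment id h2 = - moment id h1"
    by auto
  ultimately show ?thesis
    using h1_pos admissible_nonneg moment_add[OF _ _ moment_weights(1)]
    by (intro that[of "\<lambda>x. h1 x + h2 x"] admissible_add) (auto intro: add_pos_nonneg)
qed

section \<open>Construction of the density\<close>

lemma mass_pos_if_ge_near_0:
  assumes g: "g \<in> admissible" and "0 < c" and ge: "\<And>x. norm x \<le> r \<Longrightarrow> c \<le> g x"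
    and "0 < measure M {\<omega> \<in> space M. Y \<omega> \<in> cball 0 r}"
  shows "0 < mass g"
proof -
  define A where "A = {\<omega> \<in> space M. Y \<omega> \<in> cball 0 r}"
  have "A = Y -` cball 0 r \<inter> space M"
    by (auto simp: A_def)
  then have A: "A \<in> sets M"
    by (simp add: borel_closed measurable_sets[OF measurable_Y])
  have "c * measure M A = (\<integral>\<omega>. c * indicator A \<omega> \<partial>M)"
    using A by simp
  also have "\<dots> \<le> (\<integral>\<omega>. g (Y \<omega>) \<partial>M)"
  proof (rule integral_mono)
    show "integrable M (\<lambda>\<omega>. c * indicator A \<omega>)"
      using A by (intro integrable_mult_right integrable_real_indicator) (auto simp: less_top[symmetric])
    show "integrable M (\<lambda>\<omega>. g (Y \<omega>))"
      using integrable_moment[OF g moment_weights(2)] by simp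
    show "c * indicator A \<omega> \<le> g (Y \<omega>)" for \<omega>
      using ge admissible_nonneg[OF g] by (auto simp: A_def indicator_def)
  qed
  also have "\<dots> = mass g"
    by (simp add: moment_def)
  finally show ?thesis
    using mult_pos_pos[OF \<open>0 < c\<close> assms(4)] by (simp add: A_def)
qed

lemma admissible_if_vanishes_outside_ball:
  assumes "continuous_on UNIV g" "\<And>x. 0 \<le> g x" "\<And>x. g x \<le> 1"
    and vanish: "\<And>x. r \<le> norm x \<Longrightarrow> g x = 0"
  shows "g \<in> admissible"
proof -
  obtain B where B: "\<And>x. x \<in> cball 0 r \<Longrightarrow> norm (w x) \<le> B"
    using compact_imp_bounded[OF compact_continuous_image[OF
        continuous_on_subset[OF continuous_w subset_UNIV] compact_cball[of 0 r]]]
    unfolding bounded_iff by blast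
  show ?thesis
  proof (rule admissibleI[where B="(1 + \<bar>r\<bar>) * (1 + \<bar>B\<bar>)"])
    show "g x * ((1 + norm x) * (1 + w x)) \<le> (1 + \<bar>r\<bar>) * (1 + \<bar>B\<bar>)" for x
    proof (cases "r \<le> norm x")
      case False
      then have "(1 + norm x) * (1 + w x) \<le> (1 + \<bar>r\<bar>) * (1 + \<bar>B\<bar>)"
        using B[of x] w_nonneg[of x] by (intro mult_mono) auto
      from mult_mono[OF assms(3)[of x] this] show ?thesis
        using weight_factors_pos[of x] by simp
    qed (simp add: vanish)
  qed (use assms in auto)
qed

lemma exists_bump:
  assumes mass_near_0: "\<And>e. 0 < e \<Longrightarrow> 0 < measure M {\<omega> \<in> space M. Y \<omega> \<in> cball 0 e}"
    and "0 < r" and w_small: "\<And>x. norm x < r \<Longrightarrow> w x \<le> \<theta>"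
  obtains b where "b \<in> admissible" "\<And>x. r \<le> norm x \<Longrightarrow> b x = 0" "0 < mass b"
    "norm (moment id b) \<le> r * mass b" "moment w b \<le> \<theta> * mass b"
proof -
  define b where "b x = max 0 (1 - norm x / r)" for x :: 'a
  have b_nonneg: "0 \<le> b x" and b_le_1: "b x \<le> 1" for x
    using \<open>0 < r\<close> by (auto simp: b_def)
  have b_vanish: "b x = 0" if "r \<le> norm x" for x
    using that \<open>0 < r\<close> by (simp add: b_def)
  have b_small: "b x * norm x \<le> r * b x \<and> b x * \<bar>w x\<bar> \<le> \<theta> * b x" for x
  proof (cases "r \<le> norm x")
    case False
    then have "w x \<le> \<theta>"
      by (intro w_small) simp
    then have "w x * b x \<le> \<theta> * b x"
      using b_nonneg by (intro mult_right_mono)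
    moreover have "norm x * b x \<le> r * b x"
      using False b_nonneg by (intro mult_right_mono) auto
    ultimately show ?thesis
      using w_nonneg[of x] by (simp add: mult.commute)
  qed (simp add: b_vanish)
  have "b \<in> admissible"
    using \<open>0 < r\<close> b_nonneg b_le_1 b_vanish unfolding b_def
    by (intro admissible_if_vanishes_outside_ball[where r=r]) (auto intro!: continuous_intros)
  have "0 < mass b"
    using \<open>0 < r\<close> mass_near_0[of "r / 2"]
    by (intro mass_pos_if_ge_near_0[OF \<open>b \<in> admissible\<close>, of "1 / 2" "r / 2"]) (auto simp: b_def)
  moreover have "norm (moment id b) \<le> r * mass b"
    using b_small by (intro norm_moment_le[OF \<open>b \<in> admissible\<close> moment_weights(1)]) simp
  moreover have "moment w b \<le> \<theta> * mass b"
    using norm_moment_le[OF \<open>b \<in> admissible\<close> moment_weights(3), of \<theta>] b_small by auto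
  ultimately show ?thesis
    using \<open>b \<in> admissible\<close> b_vanish that by blast
qed

lemma tail_integral_le_mass:
  assumes f: "f \<in> admissible" and h: "h \<in> admissible" and le: "\<And>x. R \<le> norm x \<Longrightarrow> f x \<le> h x"
  shows "(\<integral>\<omega>. f (Y \<omega>) * indicator {x. norm x \<ge> R} (Y \<omega>) \<partial>M) \<le> mass h"
proof -
  have "{x::'a. R \<le> norm x} \<in> sets borel"
    by (intro borel_closed closed_Collect_le) (auto intro: continuous_intros)
  then have "(\<lambda>\<omega>. f (Y \<omega>) * indicator {x. norm x \<ge> R} (Y \<omega>)) \<in> borel_measurable M"
    using f by measurable
  with integrable_moment[OF f moment_weights(2)]
  have "integrable M (\<lambda>\<omega>. f (Y \<omega>) * indicator {x. norm x \<ge> R} (Y \<omega>))"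
    by (rule Bochner_Integration.integrable_bound) (auto simp: indicator_def admissible_nonneg[OF f])
  then have "(\<integral>\<omega>. f (Y \<omega>) * indicator {x. norm x \<ge> R} (Y \<omega>) \<partial>M) \<le> (\<integral>\<omega>. h (Y \<omega>) \<partial>M)"
    using integrable_moment[OF h moment_weights(2)] le admissible_nonneg[OF h]
    by (intro integral_mono) (auto simp: indicator_def)
  then show ?thesis
    by (simp add: moment_def)
qed

definition small_centered_density :: "real \<Rightarrow> ('a \<Rightarrow> real) \<Rightarrow> bool" where
  "small_centered_density \<eta> f \<longleftrightarrow> f \<in> C_plus
     \<and> (\<integral>\<omega>. f (Y \<omega>) \<partial>M) = 1
     \<and> (\<integral>\<^sup>+\<omega>. ennreal (f (Y \<omega>) * w (Y \<omega>)) \<partial>M) < ennreal \<eta>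
     \<and> (\<integral>\<omega>. f (Y \<omega>) * indicator {x. norm x \<ge> \<eta>} (Y \<omega>) \<partial>M) < \<eta>
     \<and> integrable M (\<lambda>\<omega>. f (Y \<omega>) *\<^sub>R Y \<omega>)
     \<and> (\<integral>\<omega>. f (Y \<omega>) *\<^sub>R Y \<omega> \<partial>M) = 0"

lemma normalized_density:
  assumes f: "f \<in> admissible" and f_pos: "\<And>x. 0 < f x" and centered: "moment id f = 0"
    and w_small: "moment w f < \<eta> * mass f"
    and tail_small: "(\<integral>\<omega>. f (Y \<omega>) * indicator {x. norm x \<ge> \<eta>} (Y \<omega>) \<partial>M) < \<eta> * mass f"
  shows "\<exists>g. small_centered_density \<eta> g"
proof -
  have "mass f \<noteq> 0"
    using w_small moment_nonneg[of f w, OF f w_nonneg] by auto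
  then have "0 < mass f"
    using moment_nonneg[OF f, of "\<lambda>_. 1"] by simp
  define g where "g = (\<lambda>x. f x / mass f)"
  have g: "g \<in> admissible"
    using admissible_scale[OF f, of "1 / mass f"] \<open>0 < mass f\<close> by (simp add: g_def)
  have scale: "moment \<phi> g = (1 / mass f) *\<^sub>R moment \<phi> f" for \<phi> :: "'a \<Rightarrow> 'b::{banach,second_countable_topology}"
    using moment_scale[of \<phi> "1 / mass f" f] by (simp add: g_def)
  show ?thesis
    unfolding small_centered_density_def
  proof (intro exI[of _ g] conjI)
    show "g \<in> C_plus"
      using g admissible_tendsto_0[OF g] f_pos \<open>0 < mass f\<close>
      by (auto simp: C_plus_def admissible_def g_def)
    show "(\<integral>\<omega>. g (Y \<omega>) \<partial>M) = 1"
      using scale[of "\<lambda>_. 1 :: real"] \<open>0 < mass f\<close> by (simp add: moment_def)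
    have "(\<integral>\<^sup>+\<omega>. ennreal (g (Y \<omega>) * w (Y \<omega>)) \<partial>M) = ennreal (moment w g)"
      using integrable_moment[OF g moment_weights(3)] admissible_nonneg[OF g] w_nonneg
      by (simp add: moment_def nn_integral_eq_integral)
    moreover have "moment w g < \<eta>"
      using scale[of w] w_small \<open>0 < mass f\<close> by (simp add: divide_less_eq mult.commute)
    ultimately show "(\<integral>\<^sup>+\<omega>. ennreal (g (Y \<omega>) * w (Y \<omega>)) \<partial>M) < ennreal \<eta>"
      using moment_nonneg[of g w, OF g w_nonneg] by (simp add: ennreal_less_iff)
    show "(\<integral>\<omega>. g (Y \<omega>) * indicator {x. norm x \<ge> \<eta>} (Y \<omega>) \<partial>M) < \<eta>"
      using tail_small \<open>0 < mass f\<close> by (simp add: g_def field_simps)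
    show "integrable M (\<lambda>\<omega>. g (Y \<omega>) *\<^sub>R Y \<omega>)"
      using integrable_moment[OF g moment_weights(1)] by simp
    show "(\<integral>\<omega>. g (Y \<omega>) *\<^sub>R Y \<omega> \<partial>M) = 0"
      using scale[of id] centered by (simp add: moment_def)
  qed
qed

lemma density_from_corrected_bump:
  assumes "0 < \<eta>"
    and b: "b \<in> admissible" "\<And>x. \<eta> \<le> norm x \<Longrightarrow> b x = 0" "moment w b \<le> \<eta> / 3 * mass b"
    and g: "g \<in> admissible" "moment id g = - moment id b" "cost g \<le> \<eta> / 3 * mass b"
    and h: "h \<in> admissible" "\<And>x. 0 < h x" "moment id h = 0"
    and \<delta>: "0 < \<delta>" "\<delta> * cost h < \<eta> / 3 * mass b"
  shows "\<exists>f. small_centered_density \<eta> f"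
proof -
  define k where "k = (\<lambda>x. g x + \<delta> * h x)"
  have k: "k \<in> admissible"
    unfolding k_def using g h \<delta> by (intro admissible_add admissible_scale) auto
  have moment_k: "moment \<phi> k = moment \<phi> g + \<delta> *\<^sub>R moment \<phi> h" if "moment_weight \<phi>"
    for \<phi> :: "'a \<Rightarrow> 'b::{banach,second_countable_topology}"
    unfolding k_def using g h \<delta> that by (simp add: moment_add admissible_scale moment_scale)
  have cost_k: "cost k < 2 / 3 * \<eta> * mass b"
    using moment_k[OF moment_weights(4)] g(3) \<delta>(2) by simp
  have le_cost_k: "mass k \<le> cost k" "moment w k \<le> cost k"
    using w_nonneg by (auto intro!: moment_mono[OF k] simp: moment_weights)
  define f where "f = (\<lambda>x. b x + k x)"
  have f: "f \<in> admissible"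
    unfolding f_def using b(1) k by (rule admissible_add)
  have moment_f: "moment \<phi> f = moment \<phi> b + moment \<phi> k" if "moment_weight \<phi>"
    for \<phi> :: "'a \<Rightarrow> 'b::{banach,second_countable_topology}"
    unfolding f_def using b(1) k that by (rule moment_add)
  have "mass b \<le> mass f"
    using moment_f[OF moment_weights(2)] moment_nonneg[OF k, of "\<lambda>_. 1"] by simp
  then have "\<eta> * mass b \<le> \<eta> * mass f"
    using \<open>0 < \<eta>\<close> by simp
  have "0 \<le> \<eta> * mass b"
    using \<open>0 < \<eta>\<close> moment_nonneg[OF b(1), of "\<lambda>_. 1"] by simp
  show ?thesis
  proof (rule normalized_density[OF f])
    show "0 < f x" for x
      using admissible_nonneg[OF b(1)] admissible_nonneg[OF g(1)] h(2) \<delta>(1)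
      by (simp add: f_def k_def add_nonneg_pos)
    show "moment id f = 0"
      using moment_f[OF moment_weights(1)] moment_k[OF moment_weights(1)] g(2) h(3) by simp
    show "moment w f < \<eta> * mass f"
      using moment_f[OF moment_weights(3)] b(3) le_cost_k(2) cost_k \<open>\<eta> * mass b \<le> \<eta> * mass f\<close>
      by simp
    have "(\<integral>\<omega>. f (Y \<omega>) * indicator {x. norm x \<ge> \<eta>} (Y \<omega>) \<partial>M) \<le> mass k"
      using f k b(2) by (intro tail_integral_le_mass) (simp_all add: f_def)
    then show "(\<integral>\<omega>. f (Y \<omega>) * indicator {x. norm x \<ge> \<eta>} (Y \<omega>) \<partial>M) < \<eta> * mass f"
      using le_cost_k(1) cost_k \<open>0 \<le> \<eta> * mass b\<close> \<open>\<eta> * mass b \<le> \<eta> * mass f\<close>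
      by linarith
  qed
qed

lemma exists_density:
  assumes mass_near_0: "\<And>e. 0 < e \<Longrightarrow> 0 < measure M {\<omega> \<in> space M. Y \<omega> \<in> cball 0 e}"
    and "w 0 = 0" and "0 < \<eta>"
  shows "\<exists>f. small_centered_density \<eta> f"
proof -
  obtain C where C: "0 \<le> C"
    "\<And>v. v \<in> moment id ` admissible \<Longrightarrow> \<exists>g\<in>admissible. moment id g = v \<and> cost g \<le> C * norm v"
    using first_moment_cost_bound by blast
  obtain h where h: "h \<in> admissible" "\<And>x. 0 < h x" "moment id h = 0"
    using exists_positive_zero_first_moment by blast
  have "\<exists>r>0. \<forall>x. dist x 0 < r \<longrightarrow> dist (w x) (w 0) < \<eta> / 3"
    using continuous_w \<open>0 < \<eta>\<close> unfolding continuous_on_iff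
    by (metis UNIV_I divide_pos_pos zero_less_numeral)
  then obtain r where r: "0 < r" "\<And>x. norm x < r \<Longrightarrow> w x \<le> \<eta> / 3"
    using \<open>w 0 = 0\<close> by (force simp: dist_norm)
  define \<epsilon> where "\<epsilon> = min \<eta> (min r (\<eta> / (3 * (C + 1))))"
  have "C * \<epsilon> \<le> C * (\<eta> / (3 * (C + 1)))"
    using \<open>0 \<le> C\<close> by (intro mult_left_mono) (auto simp: \<epsilon>_def)
  also have "\<dots> \<le> \<eta> / 3"
    using \<open>0 \<le> C\<close> \<open>0 < \<eta>\<close> by (simp add: field_simps)
  finally have \<epsilon>: "0 < \<epsilon>" "\<epsilon> \<le> \<eta>" "\<epsilon> \<le> r" "C * \<epsilon> \<le> \<eta> / 3"
    using \<open>0 < \<eta>\<close> \<open>0 < r\<close> \<open>0 \<le> C\<close> by (auto simp: \<epsilon>_def)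
  obtain b where b: "b \<in> admissible" "\<And>x. \<epsilon> \<le> norm x \<Longrightarrow> b x = 0" "0 < mass b"
    "norm (moment id b) \<le> \<epsilon> * mass b" "moment w b \<le> \<eta> / 3 * mass b"
    using exists_bump[OF mass_near_0 \<open>0 < \<epsilon>\<close>, of "\<eta> / 3"] r(2) \<epsilon>(3) by auto
  have "- moment id b \<in> moment id ` admissible"
    using subspace_first_moments b(1) by (intro subspace_neg) auto
  from C(2)[OF this] obtain g where g: "g \<in> admissible" "moment id g = - moment id b"
    "cost g \<le> C * norm (moment id b)"
    by auto
  have "cost g \<le> C * \<epsilon> * mass b"
    using g(3) mult_left_mono[OF b(4) \<open>0 \<le> C\<close>] by (simp add: mult.assoc)
  also have "\<dots> \<le> \<eta> / 3 * mass b"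
    using \<epsilon>(4) b(3) by (intro mult_right_mono) auto
  finally have "cost g \<le> \<eta> / 3 * mass b" .
  define \<delta> where "\<delta> = \<eta> * mass b / (3 * (cost h + 1))"
  have "0 \<le> cost h"
    using h(1) w_nonneg by (intro moment_nonneg) (auto simp: add_nonneg_nonneg)
  then have "0 < \<delta>" "\<delta> * cost h < \<eta> / 3 * mass b"
    using \<open>0 < \<eta>\<close> b(3) by (simp_all add: \<delta>_def field_simps)
  then show ?thesis
    using b g h \<open>cost g \<le> \<eta> / 3 * mass b\<close> \<epsilon>(2) \<open>0 < \<eta>\<close>
    by (intro density_from_corrected_bump) auto
qed

end

theorem lemma7p1:
  fixes M :: "'w measure" and Y :: "'w \<Rightarrow> 'a::euclidean_space" and w :: "'a \<Rightarrow> real"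
  assumes "prob_space M"
    and "Y \<in> borel_measurable M"
    and "continuous_on UNIV w" and "\<And>x. w x \<ge> 0" and "w 0 = 0"
    and "0 \<in> S_of M Y"
    and "\<And>e. e > 0 \<Longrightarrow> measure M {\<omega> \<in> space M. Y \<omega> \<in> cball 0 e} > 0"
    and "\<eta> > 0"
  shows "\<exists>f \<in> C_plus.
           (\<integral>\<omega>. f (Y \<omega>) \<partial>M) = 1
         \<and> (\<integral>\<^sup>+\<omega>. ennreal (f (Y \<omega>) * w (Y \<omega>)) \<partial>M) < ennreal \<eta>
         \<and> (\<integral>\<omega>. f (Y \<omega>) * indicator {x. norm x \<ge> \<eta>} (Y \<omega>) \<partial>M) < \<eta>
         \<and> integrable M (\<lambda>\<omega>. f (Y \<omega>) *\<^sub>R Y \<omega>)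
         \<and> (\<integral>\<omega>. f (Y \<omega>) *\<^sub>R Y \<omega> \<partial>M) = 0"
proof -
  interpret moment_problem M Y w
    using assms(1-4,6) by (simp add: moment_problem_def moment_problem_axioms_def)
  show ?thesis
    using exists_density[OF assms(7,5,8)] unfolding small_centered_density_def by blast
qed

end
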